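(* Let $k$ be a field of characteristic $p>0$, $P$ a finite poset, $R=\mathcal{R}_k[J(P)]$ the Hibi ring and $\mathfrak{m}=R_+$. Then \[ \limsup_{e\to\infty}\frac{\nu(p^e)}{p^e}\ \le\ \operatorname{rank}^*P+2, \] where $\nu(p^e)=\max\{r\in\mathbb{N}\mid\mathfrak{m}^r\not\subseteq\mathfrak{m}^{[p^e]}\}$.
   Context: Let $P=\{p_1,\dots,p_N\}$ be a finite poset and $J(P)$ the set of poset ideals of $P$ (down-closed subsets, including $\emptyset$ and $P$). The Hibi ring is $\mathcal{R}_k[J(P)]=k[\,T\prod_{p_i\in I}X_i\mid I\in J(P)\,]\subseteq k[T,X_1,\dots,X_N]$, each generator in degree $1$; $\mathfrak{m}=R_+$ is generated by these generators; $\mathfrak{m}^{[q]}=(x^q\mid x\in\mathfrak{m})$. $x\lessdot y$ means $x<y$ with no $z$ satisfying $x<z<y$. A path is a sequence $C=(q_1,\dots,q_t)$ of distinct elements of $P$ with $q_1$ minimal in $P$, consecutive elements related by $q_i\lessdot q_{i+1}$ or $q_{i+1}\lessdot q_i$, and $q_{t-1}\lessdot q_t$ (when $t\ge2$); it is maximal if $q_t$ is maximal in $P$. For $1<i<t$, $q_i$ is locally maximal if $q_{i-1}\lessdot q_i$ and $q_{i+1}\lessdot q_i$, locally minimal if $q_i\lessdot q_{i-1}$ and $q_i\lessdot q_{i+1}$; $q_1$ counts as locally minimal and $q_t$ as locally maximal. The decomposition $C=A_1+D_1+\cdots+D_{n-1}+A_n$ splits $C$ into consecutive blocks: $A_1$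 is $q_1$ through the first locally maximal element, $D_1$ the following elements through the next locally minimal element, $A_2$ the following elements through the next locally maximal element, etc., $A_n$ ending at $q_t$; $t(A_i)$ is the last element of $A_i$, $V(\cdot)$ the set of elements of a block, $\langle A\rangle=\{q\in P\mid q\le t(A)\}$, and $\langle A_i\setminus t(A_i)\rangle$ the poset ideal generated by the elements of $A_i$ other than $t(A_i)$. $C$ satisfies ( * ) if for all $1\le i\le n-1$: (1) $V(D_i)\cap(\bigcup_{m=1}^{i-1}\langle A_m\rangle\cup\langle A_i\setminus t(A_i)\rangle\cup\{t(A_i)\})=\emptyset$; (2) $V(A_{i+1})\cap\bigcup_{m=1}^{i}\langle A_m\rangle=\emptyset$. $\operatorname{len}^*C=\#\{i\mid q_i\lessdot q_{i+1}\}$, and $\operatorname{rank}^*P$ is the maximum of $\operatorname{len}^*C$ over maximal paths $C$ satisfying ( * ). *)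

theory Defs
  imports Main "HOL-Library.Poly_Mapping" "HOL-Library.Liminf_Limsup" "HOL-Library.Extended_Real"
begin

section \<open>Combinatorics of the poset (the whole finite type 'a with its order)\<close>

definition covers :: "'a::order \<Rightarrow> 'a \<Rightarrow> bool" where
  "covers x y \<longleftrightarrow> x < y \<and> \<not> (\<exists>z. x < z \<and> z < y)"

text \<open>A path (q_1,...,q_t) is a nonempty list; positions are 0-based.\<close>
definition is_path :: "'a::order list \<Rightarrow> bool" where
  "is_path C \<longleftrightarrow> C \<noteq> [] \<and> distinct C \<and> (\<forall>z. \<not> z < hd C) \<and>
     (\<forall>i. Suc i < length C \<longrightarrow> covers (C!i) (C!Suc i) \<or> covers (C!Suc i) (C!i)) \<and>
     (length C \<ge> 2 \<longrightarrow> covers (C!(length C - 2)) (C!(length C - 1)))"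

definition is_maximal_path :: "'a::order list \<Rightarrow> bool" where
  "is_maximal_path C \<longleftrightarrow> is_path C \<and> (\<forall>z. \<not> last C < z)"

definition loc_max :: "'a::order list \<Rightarrow> nat \<Rightarrow> bool" where
  "loc_max C j \<longleftrightarrow> j = length C - 1 \<or>
     (0 < j \<and> j + 1 < length C \<and> covers (C!(j-1)) (C!j) \<and> covers (C!(j+1)) (C!j))"

definition loc_min :: "'a::order list \<Rightarrow> nat \<Rightarrow> bool" where
  "loc_min C j \<longleftrightarrow> j = 0 \<or>
     (0 < j \<and> j + 1 < length C \<and> covers (C!j) (C!(j-1)) \<and> covers (C!j) (C!(j+1)))"

text \<open>Positions of the ends of the blocks A_1,...,A_n (locally maximal positions) and
  of the blocks D_1,...,D_{n-1} (locally minimal positions other than the first one).\<close>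
definition max_pos :: "'a::order list \<Rightarrow> nat list" where
  "max_pos C = sorted_list_of_set {j. j < length C \<and> loc_max C j}"

definition min_pos :: "'a::order list \<Rightarrow> nat list" where
  "min_pos C = sorted_list_of_set {j. 0 < j \<and> j < length C \<and> loc_min C j}"

definition nblocks :: "'a::order list \<Rightarrow> nat" where
  "nblocks C = length (max_pos C)"

text \<open>Block A_{i+1} (0-based i): positions from the start up to max_pos!i.\<close>
definition A_start :: "'a::order list \<Rightarrow> nat \<Rightarrow> nat" where
  "A_start C i = (if i = 0 then 0 else Suc (min_pos C ! (i - 1)))"

definition tA :: "'a::order list \<Rightarrow> nat \<Rightarrow> 'a" where
  "tA C i = C ! (max_pos C ! i)"

definition VA :: "'a::order list \<Rightarrow> nat \<Rightarrow> 'a set" where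
  "VA C i = {C ! j | j. A_start C i \<le> j \<and> j \<le> max_pos C ! i}"

definition VD :: "'a::order list \<Rightarrow> nat \<Rightarrow> 'a set" where
  "VD C i = {C ! j | j. max_pos C ! i < j \<and> j \<le> min_pos C ! i}"

definition downA :: "'a::order list \<Rightarrow> nat \<Rightarrow> 'a set" where
  "downA C i = {x. x \<le> tA C i}"

definition downA_minus_top :: "'a::order list \<Rightarrow> nat \<Rightarrow> 'a set" where
  "downA_minus_top C i = {x. \<exists>y \<in> VA C i - {tA C i}. x \<le> y}"

text \<open>Condition (*), with 0-based block indices (paper's i = our i+1).\<close>
definition cond_star :: "'a::order list \<Rightarrow> bool" where
  "cond_star C \<longleftrightarrow> (\<forall>i. i + 1 < nblocks C \<longrightarrow>
      VD C i \<inter> ((\<Union>m<i. downA C m) \<union> downA_minus_top C i \<union> {tA C i}) = {} \<and>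
      VA C (i + 1) \<inter> (\<Union>m\<le>i. downA C m) = {})"

definition len_star :: "'a::order list \<Rightarrow> nat" where
  "len_star C = card {i. Suc i < length C \<and> covers (C!i) (C!Suc i)}"

definition rank_star :: "'a::{finite,order} itself \<Rightarrow> nat" where
  "rank_star _ = Max {len_star (C :: 'a list) | C. is_maximal_path C \<and> cond_star C}"

text \<open>Polynomial ring k[T,X_p]: variable None is T, Some p is X_p.\<close>
type_synonym ('a, 'k) hpoly = "('a option \<Rightarrow>\<^sub>0 nat) \<Rightarrow>\<^sub>0 'k"

definition poset_ideals :: "'a::order set set" where
  "poset_ideals = {I. \<forall>x y. y \<in> I \<longrightarrow> x \<le> y \<longrightarrow> x \<in> I}"

definition hibi_gen :: "'a::order set \<Rightarrow> ('a, 'k::field) hpoly" where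
  "hibi_gen I = Poly_Mapping.single
      (Poly_Mapping.single None 1 + (\<Sum>p\<in>I. Poly_Mapping.single (Some p) 1)) 1"

text \<open>The Hibi ring R = k[T prod_{p in I} X_p | I in J(P)]: the k-subalgebra generated.\<close>
inductive_set hibi_ring :: "('a::order, 'k::field) hpoly set" where
  const: "Poly_Mapping.single 0 c \<in> hibi_ring"
| gen: "I \<in> poset_ideals \<Longrightarrow> hibi_gen I \<in> hibi_ring"
| add: "f \<in> hibi_ring \<Longrightarrow> g \<in> hibi_ring \<Longrightarrow> f + g \<in> hibi_ring"
| mult: "f \<in> hibi_ring \<Longrightarrow> g \<in> hibi_ring \<Longrightarrow> f * g \<in> hibi_ring"

inductive_set R_ideal :: "('a::order, 'k::field) hpoly set \<Rightarrow> ('a, 'k) hpoly set"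
  for S where
  zero: "0 \<in> R_ideal S"
| smult: "r \<in> hibi_ring \<Longrightarrow> s \<in> S \<Longrightarrow> r * s \<in> R_ideal S"
| add: "f \<in> R_ideal S \<Longrightarrow> g \<in> R_ideal S \<Longrightarrow> f + g \<in> R_ideal S"

text \<open>The homogeneous maximal ideal m = R_+, generated by the generators.\<close>
definition hibi_max :: "('a::order, 'k::field) hpoly set" where
  "hibi_max = R_ideal (hibi_gen ` poset_ideals)"

definition max_pow :: "nat \<Rightarrow> ('a::order, 'k::field) hpoly set" where
  "max_pow r = R_ideal {prod_list xs | xs. length xs = r \<and> set xs \<subseteq> hibi_max}"

definition max_frob :: "nat \<Rightarrow> ('a::order, 'k::field) hpoly set" where
  "max_frob q = R_ideal {x ^ q | x. x \<in> hibi_max}"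

definition hibi_nu :: "'a::order itself \<Rightarrow> 'k::field itself \<Rightarrow> nat \<Rightarrow> nat" where
  "hibi_nu _ _ q = Max {r. \<not> (max_pow r \<subseteq> (max_frob q :: ('a, 'k) hpoly set))}"

end

theory Submission
  imports Defs
begin

text \<open>
  A monomial T^s * prod_p X_p^(c p) lies in the Hibi ring exactly when c is antitone and
  bounded by s, and m^r is spanned by those with s \<ge> r. Such a monomial lies in m^[q] as soon
  as some poset ideal I splits it, i.e. c - q * chi_I is again antitone and bounded by s - q.
  If no ideal splits it, the elements reachable from the heavy ones (c > s - q) by walks in the
  cover graph whose upward steps lower c by less than q fail to form a splitting ideal, and this
  produces such a walk ending at a light element (c < q). A walk of this kind with the fewest
  upward steps, and then shortest, never comes back below an earlier element once it has gone
  up; extended by saturated chains down to a minimal and up to a maximal element it becomes a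
  maximal path satisfying (*). Since c drops by at most q - 1 per upward step,
  s + 2 \<le> 2q + len* C * (q - 1). Hence nu(q) \<le> (rank* P + 2)(q - 1) for every q \<ge> 1.
\<close>

section \<open>Walks in the cover graph\<close>

lemma covers_less: "covers x y \<Longrightarrow> x < y"
  by (simp add: covers_def)

lemma covers_asym: "covers x y \<Longrightarrow> \<not> covers y x"
  by (auto simp: covers_def)

abbreviation cover_walk :: "'a::order list \<Rightarrow> bool" where
  "cover_walk \<equiv> successively (\<lambda>x y. covers x y \<or> covers y x)"

abbreviation saturated_chain :: "'a::order list \<Rightarrow> bool" where
  "saturated_chain \<equiv> successively covers"

abbreviation small_drops :: "('a::order \<Rightarrow> nat) \<Rightarrow> nat \<Rightarrow> 'a list \<Rightarrow> bool" where
  "small_drops c q \<equiv> successively (\<lambda>x y. covers x y \<longrightarrow> c x < c y + q)"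

definition glue :: "'a list \<Rightarrow> 'a list \<Rightarrow> 'a list" where
  "glue xs ys = butlast xs @ ys"

lemma len_star_Nil [simp]: "len_star [] = 0"
  by (simp add: len_star_def)

lemma len_star_singleton [simp]: "len_star [x] = 0"
  by (simp add: len_star_def)

lemma len_star_Cons_Cons [simp]:
  "len_star (x # y # r) = (if covers x y then 1 else 0) + len_star (y # r)"
proof -
  have "{i. Suc i < length (x # y # r) \<and> covers ((x # y # r) ! i) ((x # y # r) ! Suc i)}
      = (if covers x y then {0} else {}) \<union>
        Suc ` {i. Suc i < length (y # r) \<and> covers ((y # r) ! i) ((y # r) ! Suc i)}"
    (is "?L = ?R")
  proof (rule set_eqI)
    show "i \<in> ?L \<longleftrightarrow> i \<in> ?R" for i
      by (cases i) auto
  qed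
  then show ?thesis
    unfolding len_star_def by (auto simp: card_image)
qed

lemma len_star_eq_0_iff:
  "len_star w = 0 \<longleftrightarrow> (\<forall>i. Suc i < length w \<longrightarrow> \<not> covers (w ! i) (w ! Suc i))"
proof -
  have "finite {i. Suc i < length w \<and> covers (w ! i) (w ! Suc i)}"
    by (rule finite_subset[of _ "{..<length w}"]) auto
  then show ?thesis
    unfolding len_star_def by auto
qed

lemma len_star_le_length: "len_star w \<le> length w"
proof -
  have "len_star w \<le> card {..<length w}"
    unfolding len_star_def by (rule card_mono) auto
  then show ?thesis by simp
qed

context
  fixes xs ys :: "'a list"
  assumes ne: "xs \<noteq> []" "ys \<noteq> []" and meet: "last xs = hd ys"
begin

lemma hd_glue: "hd (glue xs ys) = hd xs"
  using ne meet by (cases xs) (auto simp: glue_def)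

lemma last_glue: "last (glue xs ys) = last ys"
  using ne by (simp add: glue_def)

lemma successively_glue:
  "successively P (glue xs ys) \<longleftrightarrow> successively P xs \<and> successively P ys"
proof -
  obtain a x where xs: "xs = a @ [x]"
    using ne by (metis append_butlast_last_id)
  obtain b where ys: "ys = x # b"
    using ne meet xs by (cases ys) auto
  show ?thesis
    unfolding glue_def xs ys by (auto simp: successively_append_iff successively_Cons)
qed

end

lemma len_star_glue:
  assumes "xs \<noteq> []" "ys \<noteq> []" "last xs = hd ys"
  shows "len_star (glue xs ys) = len_star xs + len_star ys"
  using assms
proof (induction xs rule: induct_list012)
  case (2 x)
  then show ?case by (simp add: glue_def)
next
  case (3 x y zs)
  have "glue (y # zs) ys \<noteq> [] \<and> hd (glue (y # zs) ys) = y"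
    using 3 by (cases zs) (auto simp: glue_def)
  then obtain r where "glue (y # zs) ys = y # r"
    by (cases "glue (y # zs) ys") auto
  moreover have "glue (x # y # zs) ys = x # glue (y # zs) ys"
    by (simp add: glue_def)
  ultimately show ?case using 3 by simp
qed simp

lemma glue_take_drop:
  assumes "k < length xs"
  shows "glue (take (Suc k) xs) (drop k xs) = xs"
    and "last (take (Suc k) xs) = hd (drop k xs)"
  using assms by (simp_all add: glue_def take_Suc_conv_app_nth hd_drop_conv_nth)

lemma take_drop_split:
  fixes xs :: "'a::order list"
  assumes "k < length xs"
  shows "successively P xs \<longleftrightarrow> successively P (take (Suc k) xs) \<and> successively P (drop k xs)"
    and "len_star xs = len_star (take (Suc k) xs) + len_star (drop k xs)"
proof -
  have ne: "take (Suc k) xs \<noteq> []" "drop k xs \<noteq> []"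
    using assms by auto
  note meet = glue_take_drop(2)[OF assms]
  show "successively P xs \<longleftrightarrow> successively P (take (Suc k) xs) \<and> successively P (drop k xs)"
    using successively_glue[OF ne meet] glue_take_drop(1)[OF assms] by simp
  show "len_star xs = len_star (take (Suc k) xs) + len_star (drop k xs)"
    using len_star_glue[OF ne meet] glue_take_drop(1)[OF assms] by simp
qed

lemma walk_weight_drop:
  fixes c :: "'a::order \<Rightarrow> nat"
  assumes "antimono c" and "cover_walk w" and "small_drops c q w" and "w \<noteq> []"
  shows "c (hd w) \<le> c (last w) + len_star w * (q - 1)"
  using assms(2-4)
proof (induction w rule: induct_list012)
  case (3 x y r)
  then have IH: "c y \<le> c (last (y # r)) + len_star (y # r) * (q - 1)"
    by simp
  show ?case
  proof (cases "covers x y")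
    case True
    then have "c x < c y + q"
      using "3.prems"(2) by simp
    then show ?thesis using IH True by simp
  next
    case False
    then have "covers y x"
      using "3.prems"(1) by simp
    then have "c x \<le> c y"
      using antimonoD[OF assms(1)] covers_less by (metis less_imp_le)
    then show ?thesis using IH False by simp
  qed
qed simp_all

lemma exists_covered_between:
  fixes x y :: "'a::{finite,order}"
  assumes "y < x"
  shows "\<exists>z. y \<le> z \<and> covers z x"
proof -
  obtain m where m: "y \<le> m" "m < x" and max: "\<And>b. y \<le> b \<Longrightarrow> b < x \<Longrightarrow> m \<le> b \<Longrightarrow> m = b"
    using finite_has_maximal[of "{z. y \<le> z \<and> z < x}"] assms by auto
  have "covers m x"
    unfolding covers_def using m max by (metis order.trans less_le_not_le)
  with m show ?thesis by auto
qed

lemma saturated_chain_exists: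
  fixes x y :: "'a::{finite,order}"
  assumes "y \<le> x"
  shows "\<exists>L. L \<noteq> [] \<and> hd L = y \<and> last L = x \<and> saturated_chain L"
  using assms
proof (induction "card {z. y \<le> z \<and> z < x}" arbitrary: x rule: less_induct)
  case less
  show ?case
  proof (cases "y = x")
    case True
    then show ?thesis by (intro exI[of _ "[x]"]) auto
  next
    case False
    with less.prems have "y < x"
      by simp
    then obtain z where z: "y \<le> z" "covers z x"
      using exists_covered_between by blast
    have "{w. y \<le> w \<and> w < z} \<subset> {w. y \<le> w \<and> w < x}"
      using z covers_less[OF z(2)] by auto
    then have "card {w. y \<le> w \<and> w < z} < card {w. y \<le> w \<and> w < x}"
      by (intro psubset_card_mono) auto
    then obtain L where "L \<noteq> []" "hd L = y" "last L = z" "saturated_chain L"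
      using less.hyps z(1) by blast
    then show ?thesis
      using z(2) by (intro exI[of _ "L @ [x]"]) (auto simp: successively_append_iff)
  qed
qed

lemma saturated_chain_sorted: "saturated_chain L \<Longrightarrow> sorted_wrt (<) L"
  using successively_mono[of covers L "(<)"] covers_less
  by (metis successively_conv_sorted_wrt transp_on_less)

lemma saturated_chain_bounds:
  assumes "saturated_chain L" "y \<in> set L"
  shows "hd L \<le> y" and "y \<le> last L"
proof -
  have sorted: "sorted_wrt (<) L"
    using assms(1) by (rule saturated_chain_sorted)
  show "hd L \<le> y"
    using sorted assms(2) by (cases L) auto
  show "y \<le> last L"
    using sorted assms(2) by (cases L rule: rev_cases) (auto simp: sorted_wrt_append)
qed

lemma descending_walk_exists:
  fixes x y :: "'a::{finite,order}"
  assumes "y \<le> x"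
  shows "\<exists>L. L \<noteq> [] \<and> hd L = x \<and> last L = y \<and> cover_walk L \<and> len_star L = 0"
proof -
  obtain L where L: "L \<noteq> []" "hd L = y" "last L = x" "saturated_chain L"
    using saturated_chain_exists[OF assms] by blast
  have down: "successively (\<lambda>a b. covers b a) (rev L)"
    using L(4) by simp
  then have "cover_walk (rev L)"
    by (rule successively_mono) simp
  moreover have "len_star (rev L) = 0"
    unfolding len_star_eq_0_iff using successively_nth[OF down] covers_asym by blast
  ultimately show ?thesis
    using L by (intro exI[of _ "rev L"]) (simp add: hd_rev last_rev)
qed

lemma exists_cover_between:
  fixes x y :: "'a::{finite,order}"
  assumes "x < y"
  shows "\<exists>z. covers x z \<and> z \<le> y"
proof -
  obtain L where L: "L \<noteq> []" "hd L = x" "last L = y" "saturated_chain L"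
    using saturated_chain_exists[of x y] assms less_imp_le by blast
  then obtain z r where Lzr: "L = x # z # r"
    using assms by (cases L rule: remdups_adj.cases) auto
  have "z \<le> y"
    using saturated_chain_sorted[OF L(4)] L(3) unfolding Lzr
    by (cases r rule: rev_cases) (auto simp: sorted_wrt_append less_imp_le)
  then show ?thesis
    using L(4) Lzr by auto
qed

lemma small_drops_if_no_rise: "len_star w = 0 \<Longrightarrow> small_drops c q w"
  by (simp add: len_star_eq_0_iff successively_conv_nth)

section \<open>Paths that never return below an earlier element satisfy (*)\<close>

lemma filter_upt_split: "x < t \<Longrightarrow> filter P [0..<t] = filter P [0..<Suc x] @ filter P [Suc x..<t]"
  using upt_add_eq_append[of 0 "Suc x" "t - Suc x"] by simp

lemma nth_filter_upt_le_iff: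
  assumes "i < length (filter P [0..<t])" "x < t"
  shows "filter P [0..<t] ! i \<le> x \<longleftrightarrow> i < length (filter P [0..<Suc x])"
proof -
  define F1 where "F1 = filter P [0..<Suc x]"
  define F2 where "F2 = filter P [Suc x..<t]"
  have F: "filter P [0..<t] = F1 @ F2"
    unfolding F1_def F2_def using assms(2) by (rule filter_upt_split)
  show ?thesis
  proof (cases "i < length F1")
    case True
    then have "filter P [0..<t] ! i \<in> set F1"
      unfolding F by (simp add: nth_append)
    then show ?thesis
      using True unfolding F1_def by (auto simp del: upt_Suc)
  next
    case False
    then have "filter P [0..<t] ! i \<in> set F2"
      using assms(1) unfolding F by (simp add: nth_append)
    then show ?thesis
      using False unfolding F1_def F2_def by auto
  qed
qed

lemma nth_filter_upt:
  assumes "i < length (filter P [0..<t])"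
  shows "P (filter P [0..<t] ! i)" and "filter P [0..<t] ! i < t"
  using nth_mem[OF assms] by (simp_all only: set_filter set_upt) auto

lemma length_filter_upt_mono: "x < t \<Longrightarrow> length (filter P [0..<Suc x]) \<le> length (filter P [0..<t])"
  using filter_upt_split[of x t P] by simp

lemma length_filter_upt_nth:
  assumes "i < length (filter P [0..<t])"
  shows "length (filter P [0..<Suc (filter P [0..<t] ! i)]) = Suc i"
proof -
  let ?F = "filter P [0..<t]" and ?x = "filter P [0..<t] ! i"
  have x: "?x < t"
    using nth_filter_upt(2)[OF assms] .
  have "i < length (filter P [0..<Suc ?x])"
    using nth_filter_upt_le_iff[OF assms x] by simp
  moreover have "\<not> Suc i < length (filter P [0..<Suc ?x])"
  proof
    assume "Suc i < length (filter P [0..<Suc ?x])"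
    moreover from this have "Suc i < length ?F"
      using length_filter_upt_mono[OF x, of P] by linarith
    ultimately have "?F ! Suc i \<le> ?x"
      using nth_filter_upt_le_iff[OF _ x] by blast
    moreover have "?x < ?F ! Suc i"
      using sorted_wrt_nth_less[OF sorted_wrt_filter[OF sorted_wrt_upt] _ \<open>Suc i < length ?F\<close>] by simp
    ultimately show False
      by simp
  qed
  ultimately show ?thesis
    by simp
qed

lemma sorted_list_of_set_eq_filter_upt: "sorted_list_of_set {j. j < n \<and> P j} = filter P [0..<n]"
proof -
  have "{j. j < n \<and> P j} = set (filter P [0..<n])"
    by auto
  moreover have "card {j. j < n \<and> P j} = length (filter P [0..<n])"
    unfolding calculation by (rule distinct_card) simp
  ultimately show ?thesis
    by (intro sorted_list_of_set_unique[THEN iffD1]) (auto intro: sorted_wrt_filter)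
qed

lemma max_pos_eq_filter: "max_pos C = filter (loc_max C) [0..<length C]"
  unfolding max_pos_def by (rule sorted_list_of_set_eq_filter_upt)

lemma min_pos_eq_filter: "min_pos C = filter (\<lambda>j. 0 < j \<and> loc_min C j) [0..<length C]"
  unfolding min_pos_def using sorted_list_of_set_eq_filter_upt[of "length C" "\<lambda>j. 0 < j \<and> loc_min C j"]
  by (simp add: conj_left_commute)

locale no_return_path =
  fixes C :: "'a::order list"
  assumes path: "is_path C"
    and no_return: "\<And>i k j. i \<le> k \<Longrightarrow> k < j \<Longrightarrow> j < length C \<Longrightarrow> covers (C ! k) (C ! Suc k) \<Longrightarrow> \<not> C ! j \<le> C ! i"
begin

abbreviation maxima_upto :: "nat \<Rightarrow> nat" where
  "maxima_upto p \<equiv> length (filter (loc_max C) [0..<Suc p])"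

abbreviation minima_upto :: "nat \<Rightarrow> nat" where
  "minima_upto p \<equiv> length (filter (\<lambda>j. 0 < j \<and> loc_min C j) [0..<Suc p])"

lemma path_distinct: "distinct C"
  using path unfolding is_path_def by blast

lemma up_iff_not_down: "Suc k < length C \<Longrightarrow> covers (C ! k) (C ! Suc k) \<longleftrightarrow> \<not> covers (C ! Suc k) (C ! k)"
  using path covers_asym unfolding is_path_def by blast

lemma last_step_up: "2 \<le> length C \<Longrightarrow> covers (C ! (length C - 2)) (C ! (length C - 1))"
  using path unfolding is_path_def by blast

lemma first_step_up:
  assumes "2 \<le> length C"
  shows "covers (C ! 0) (C ! 1)"
proof -
  have "\<not> C ! 1 < C ! 0"
    using path unfolding is_path_def by (auto simp: hd_conv_nth)
  then show ?thesis
    using up_iff_not_down[of 0] covers_less assms by auto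
qed

text \<open>Local maxima and local minima alternate along the path, starting with a maximum.\<close>
lemma maxima_minima_balance:
  "Suc p < length C \<Longrightarrow> maxima_upto p = minima_upto p + (if covers (C ! Suc p) (C ! p) then 1 else 0)"
proof (induction p)
  case 0
  then have "\<not> loc_max C 0" "\<not> covers (C ! 1) (C ! 0)"
    using first_step_up covers_asym unfolding loc_max_def by auto
  then show ?case
    by simp
next
  case (Suc p)
  have IH: "maxima_upto p = minima_upto p + (if covers (C ! Suc p) (C ! p) then 1 else 0)"
    using Suc by simp
  have "loc_max C (Suc p) \<longleftrightarrow> \<not> covers (C ! Suc p) (C ! p) \<and> covers (C ! Suc (Suc p)) (C ! Suc p)"
    using Suc.prems up_iff_not_down[of p] unfolding loc_max_def by auto
  moreover have "loc_min C (Suc p) \<longleftrightarrow> covers (C ! Suc p) (C ! p) \<and> \<not> covers (C ! Suc (Suc p)) (C ! Suc p)"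
    using Suc.prems up_iff_not_down[of "Suc p"] unfolding loc_min_def by auto
  moreover have "maxima_upto (Suc p) = maxima_upto p + (if loc_max C (Suc p) then 1 else 0)"
    and "minima_upto (Suc p) = minima_upto p + (if loc_min C (Suc p) then 1 else 0)"
    by simp_all
  ultimately show ?case
    using IH by (cases "covers (C ! Suc p) (C ! p)"; cases "covers (C ! Suc (Suc p)) (C ! Suc p)")
      (simp_all del: upt_Suc)
qed

lemma max_pos_strict_mono: "i < j \<Longrightarrow> j < length (max_pos C) \<Longrightarrow> max_pos C ! i < max_pos C ! j"
  unfolding max_pos_eq_filter by (rule sorted_wrt_nth_less[OF sorted_wrt_filter[OF sorted_wrt_upt]])

lemma max_pos_mono: "i \<le> j \<Longrightarrow> j < length (max_pos C) \<Longrightarrow> max_pos C ! i \<le> max_pos C ! j"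
  using max_pos_strict_mono by (cases "i = j") (auto simp: less_imp_le)

lemma max_pos_nth: "m < length (max_pos C) \<Longrightarrow> loc_max C (max_pos C ! m) \<and> max_pos C ! m < length C"
  unfolding max_pos_eq_filter using nth_filter_upt by blast

lemma max_pos_interior:
  assumes "Suc m < length (max_pos C)"
  defines "a \<equiv> max_pos C ! m"
  shows "0 < a" "Suc a < length C" "covers (C ! (a - 1)) (C ! a)" "covers (C ! Suc a) (C ! a)"
proof -
  have "a < max_pos C ! Suc m" "max_pos C ! Suc m < length C"
    using max_pos_strict_mono[OF _ assms(1)] max_pos_nth[OF assms(1)] unfolding a_def by auto
  moreover have "loc_max C a"
    using max_pos_nth assms(1) unfolding a_def by simp
  ultimately show "0 < a" "Suc a < length C" "covers (C ! (a - 1)) (C ! a)" "covers (C ! Suc a) (C ! a)"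
    unfolding loc_max_def by auto
qed

lemma up_into_max_pos:
  assumes "m < length (max_pos C)" "0 < max_pos C ! m"
  shows "covers (C ! (max_pos C ! m - 1)) (C ! (max_pos C ! m))"
proof -
  let ?a = "max_pos C ! m"
  have "loc_max C ?a" "?a < length C"
    using max_pos_nth[OF assms(1)] by auto
  then consider "?a = length C - 1" | "covers (C ! (?a - 1)) (C ! ?a)"
    unfolding loc_max_def by auto
  then show ?thesis
  proof cases
    case 1
    with assms(2) have "2 \<le> length C" "?a - 1 = length C - 2"
      by linarith+
    then show ?thesis
      using last_step_up 1 by simp
  qed
qed

lemma min_pos_between:
  assumes "Suc m < length (max_pos C)"
  shows "m < length (min_pos C)" "max_pos C ! m < min_pos C ! m" "min_pos C ! m < max_pos C ! Suc m"
proof -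
  define a where "a = max_pos C ! m"
  define a' where "a' = max_pos C ! Suc m"
  note a = max_pos_interior[OF assms, folded a_def]
  have aa': "a < a'" "a' < length C"
    using max_pos_strict_mono[OF _ assms] max_pos_nth[OF assms] unfolding a_def a'_def by auto
  have "maxima_upto a = Suc m"
    using length_filter_upt_nth[of m "loc_max C" "length C"] assms unfolding a_def max_pos_eq_filter by simp
  then have min_a: "minima_upto a = m"
    using maxima_minima_balance[OF a(2)] a(4) by simp
  have a'_pred: "Suc (a' - 1) = a'"
    using aa' by simp
  then have "covers (C ! (a' - 1)) (C ! Suc (a' - 1))"
    using up_into_max_pos[OF assms] aa' unfolding a'_def by simp
  then have "maxima_upto (a' - 1) = minima_upto (a' - 1)"
    using maxima_minima_balance[of "a' - 1"] covers_asym a'_pred aa' by simp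
  moreover have "max_pos C ! m \<le> a' - 1" "a' - 1 < length C"
    using aa' unfolding a_def by linarith+
  then have "m < maxima_upto (a' - 1)"
    using nth_filter_upt_le_iff[of m "loc_max C" "length C" "a' - 1"] assms
    unfolding max_pos_eq_filter[symmetric] by simp
  ultimately have min_a': "m < minima_upto (a' - 1)"
    by simp
  then show m: "m < length (min_pos C)"
    using length_filter_upt_mono[OF \<open>a' - 1 < length C\<close>, of "\<lambda>j. 0 < j \<and> loc_min C j"]
    unfolding min_pos_eq_filter by linarith
  show "a < min_pos C ! m"
    using nth_filter_upt_le_iff[of m "\<lambda>j. 0 < j \<and> loc_min C j" "length C" a] m min_a a(2)
    unfolding min_pos_eq_filter by (simp del: upt_Suc)
  have "min_pos C ! m \<le> a' - 1"
    using nth_filter_upt_le_iff[of m "\<lambda>j. 0 < j \<and> loc_min C j" "length C" "a' - 1"] m min_a'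
      \<open>a' - 1 < length C\<close> unfolding min_pos_eq_filter by (simp del: upt_Suc)
  then show "min_pos C ! m < a'"
    using aa' by simp
qed

lemma min_pos_up:
  assumes "m < length (min_pos C)"
  shows "Suc (min_pos C ! m) < length C" "covers (C ! (min_pos C ! m)) (C ! Suc (min_pos C ! m))"
proof -
  have "0 < min_pos C ! m \<and> loc_min C (min_pos C ! m)" "min_pos C ! m < length C"
    using nth_filter_upt[of m "\<lambda>j. 0 < j \<and> loc_min C j" "length C"] assms
    unfolding min_pos_eq_filter by simp_all
  then show "Suc (min_pos C ! m) < length C" "covers (C ! (min_pos C ! m)) (C ! Suc (min_pos C ! m))"
    unfolding loc_min_def by auto
qed

lemma cond_star_A:
  assumes i: "Suc i < nblocks C"
  shows "VA C (i + 1) \<inter> (\<Union>m\<le>i. downA C m) = {}"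
proof (rule ccontr)
  assume "VA C (i + 1) \<inter> (\<Union>m\<le>i. downA C m) \<noteq> {}"
  then obtain j m where j: "A_start C (i + 1) \<le> j" "j \<le> max_pos C ! (i + 1)" and m: "m \<le> i"
    and below: "C ! j \<le> tA C m"
    unfolding VA_def downA_def by auto
  have i': "Suc i < length (max_pos C)"
    using i unfolding nblocks_def .
  note b = min_pos_between[OF i'] and up = min_pos_up[OF min_pos_between(1)[OF i']]
  have "max_pos C ! m \<le> min_pos C ! i"
    using max_pos_mono[OF m] i' b(2) by simp
  moreover have "min_pos C ! i < j" "j < length C"
    using j max_pos_nth[OF i'] unfolding A_start_def by auto
  ultimately show False
    using no_return up(2) below unfolding tA_def by blast
qed

lemma cond_star_D:
  assumes i: "Suc i < nblocks C"
  shows "VD C i \<inter> ((\<Union>m<i. downA C m) \<union> downA_minus_top C i \<union> {tA C i}) = {}"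
proof (rule ccontr)
  have i': "Suc i < length (max_pos C)"
    using i unfolding nblocks_def .
  define a where "a = max_pos C ! i"
  note a = max_pos_interior[OF i', folded a_def]
  assume "VD C i \<inter> ((\<Union>m<i. downA C m) \<union> downA_minus_top C i \<union> {tA C i}) \<noteq> {}"
  then obtain j where j: "a < j" "j \<le> min_pos C ! i" and
    cases: "(\<exists>m<i. C ! j \<le> tA C m) \<or> C ! j \<in> downA_minus_top C i \<or> C ! j = tA C i"
    unfolding VD_def downA_def a_def by auto
  have j_len: "j < length C"
    using j min_pos_up[OF min_pos_between(1)[OF i']] by simp
  consider m where "m < i" "C ! j \<le> tA C m" | "C ! j \<in> downA_minus_top C i" | "C ! j = tA C i"
    using cases by blast
  then show False
  proof cases
    case (1 m)
    then have m': "Suc m < length (max_pos C)"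
      using i' by simp
    have "max_pos C ! Suc m \<le> a"
      unfolding a_def using max_pos_mono[of "Suc m" i] 1 i' by simp
    then have "max_pos C ! m \<le> min_pos C ! m" "min_pos C ! m < j"
      using min_pos_between[OF m'] j by simp_all
    then show False
      using no_return min_pos_up(2)[OF min_pos_between(1)[OF m']] j_len 1(2) unfolding tA_def by blast
  next
    case 2
    then obtain j' where j': "A_start C i \<le> j'" "j' \<le> a" "C ! j' \<noteq> tA C i" "C ! j \<le> C ! j'"
      unfolding downA_minus_top_def VA_def a_def by auto
    then have "j' \<noteq> a"
      unfolding tA_def a_def by auto
    with j'(2) have "j' \<le> a - 1"
      by simp
    moreover have "covers (C ! (a - 1)) (C ! Suc (a - 1))" "a - 1 < j"
      using a j by simp_all
    ultimately show False
      using no_return[of j' "a - 1" j] j_len j'(4) by blast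
  next
    case 3
    then have "j = a"
      using nth_eq_iff_index_eq[OF path_distinct j_len] a(2) unfolding tA_def a_def by simp
    then show False
      using j by simp
  qed
qed

theorem satisfies_cond_star: "cond_star C"
  unfolding cond_star_def using cond_star_A cond_star_D by simp

end

section \<open>Splitting ideals and good walks\<close>

definition hibi_weight :: "nat \<Rightarrow> ('a::order \<Rightarrow> nat) \<Rightarrow> bool" where
  "hibi_weight s c \<longleftrightarrow> antimono c \<and> (\<forall>x. c x \<le> s)"

locale frobenius_weight =
  fixes c :: "'a::{finite,order} \<Rightarrow> nat" and s q :: nat
  assumes weight: "hibi_weight s c" and q_pos: "1 \<le> q"
begin

lemma antimono: "antimono c"
  using weight unfolding hibi_weight_def by blast

lemma bounded: "c x \<le> s"
  using weight unfolding hibi_weight_def by blast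

lemma weight_antimono: "x \<le> y \<Longrightarrow> c y \<le> c x"
  using antimono by (rule antimonoD)

text \<open>An element x is heavy if s < c x + q and light if c x < q.\<close>
definition good_walk :: "'a list \<Rightarrow> bool" where
  "good_walk w \<longleftrightarrow>
     w \<noteq> [] \<and> cover_walk w \<and> small_drops c q w \<and> s < c (hd w) + q \<and> c (last w) < q"

text \<open>Exactly the condition for c - q * chi_I to be a Hibi weight of degree s - q, so that
  (T * prod_{p \<in> I} X_p)^q divides T^s * prod_p X_p^(c p) in the Hibi ring.\<close>
definition splitting_ideal :: "'a set \<Rightarrow> bool" where
  "splitting_ideal I \<longleftrightarrow>
     I \<in> poset_ideals \<and> (\<forall>x\<in>I. q \<le> c x) \<and> (\<forall>x. x \<notin> I \<longrightarrow> c x + q \<le> s) \<and>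
     (\<forall>x y. x \<le> y \<longrightarrow> x \<in> I \<longrightarrow> y \<notin> I \<longrightarrow> c y + q \<le> c x)"

definition reachable :: "'a set" where
  "reachable = {last w | w. w \<noteq> [] \<and> cover_walk w \<and> small_drops c q w \<and> s < c (hd w) + q}"

lemma reachable_start: "s < c x + q \<Longrightarrow> x \<in> reachable"
  unfolding reachable_def by (intro CollectI exI[of _ "[x]"]) auto

lemma reachable_extend:
  assumes "x \<in> reachable" and L: "L \<noteq> []" "hd L = x" "cover_walk L" "small_drops c q L"
  shows "last L \<in> reachable"
proof -
  obtain w where w: "w \<noteq> []" "cover_walk w" "small_drops c q w" "s < c (hd w) + q" "last w = x"
    using assms(1) unfolding reachable_def by auto
  have meet: "last w = hd L"
    using w L by simp
  show ?thesis
    unfolding reachable_def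
    using w L successively_glue[OF w(1) L(1) meet] hd_glue[OF w(1) L(1) meet]
      last_glue[OF w(1) L(1) meet]
    by (intro CollectI exI[of _ "glue w L"]) (simp add: glue_def)
qed

lemma reachable_down:
  assumes "x \<in> reachable" "y \<le> x"
  shows "y \<in> reachable"
proof -
  obtain L where "L \<noteq> []" "hd L = x" "last L = y" "cover_walk L" "len_star L = 0"
    using descending_walk_exists[OF assms(2)] by blast
  then show ?thesis
    using reachable_extend[OF assms(1)] small_drops_if_no_rise by blast
qed

lemma reachable_up: "x \<in> reachable \<Longrightarrow> covers x y \<Longrightarrow> c x < c y + q \<Longrightarrow> y \<in> reachable"
  using reachable_extend[of x "[x, y]"] by simp

lemma reachable_gap:
  "x \<le> y \<Longrightarrow> x \<in> reachable \<Longrightarrow> y \<notin> reachable \<Longrightarrow> c y + q \<le> c x"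
proof (induction "card {z. x < z \<and> z \<le> y}" arbitrary: x rule: less_induct)
  case less
  then have "x < y"
    using order.order_iff_strict by blast
  then obtain z where z: "covers x z" "z \<le> y"
    using exists_cover_between by blast
  show ?case
  proof (cases "z \<in> reachable")
    case False
    then have "c z + q \<le> c x"
      using reachable_up[OF less.prems(2) z(1)] by linarith
    with weight_antimono[OF z(2)] show ?thesis
      by simp
  next
    case True
    have "{v. z < v \<and> v \<le> y} \<subset> {v. x < v \<and> v \<le> y}"
      using z covers_less[OF z(1)] by auto
    then have "card {v. z < v \<and> v \<le> y} < card {v. x < v \<and> v \<le> y}"
      by (intro psubset_card_mono) auto
    then have "c y + q \<le> c z"
      using less.hyps z(2) True less.prems(3) by blast
    with weight_antimono[OF less_imp_le[OF covers_less[OF z(1)]]] show ?thesis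
      by simp
  qed
qed

text \<open>If no good walk exists, the elements reachable from the heavy part of the poset by
  walks with small drops form a splitting ideal.\<close>
lemma splitting_ideal_or_good_walk: "(\<exists>I. splitting_ideal I) \<or> (\<exists>w. good_walk w)"
proof (cases "\<forall>x\<in>reachable. q \<le> c x")
  case True
  have "reachable \<in> poset_ideals"
    unfolding poset_ideals_def using reachable_down by blast
  moreover have "c x + q \<le> s" if "x \<notin> reachable" for x
    using reachable_start that by (meson not_less)
  moreover have "c y + q \<le> c x" if "x \<le> y" "x \<in> reachable" "y \<notin> reachable" for x y
    using reachable_gap that by blast
  ultimately show ?thesis
    unfolding splitting_ideal_def using True by blast
next
  case False
  then obtain w where "w \<noteq> []" "cover_walk w" "small_drops c q w" "s < c (hd w) + q" "c (last w) < q"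
    unfolding reachable_def by (auto simp: not_le)
  then show ?thesis
    unfolding good_walk_def by blast
qed

definition minimal_good_walk :: "'a list \<Rightarrow> bool" where
  "minimal_good_walk w \<longleftrightarrow> good_walk w \<and>
     (\<forall>w'. good_walk w' \<longrightarrow> len_star w \<le> len_star w' \<and> (len_star w' = len_star w \<longrightarrow> length w \<le> length w'))"

lemma minimal_good_walk_exists:
  assumes "good_walk w0"
  obtains w where "minimal_good_walk w"
proof -
  obtain w1 where w1: "good_walk w1" "\<And>w'. good_walk w' \<Longrightarrow> len_star w1 \<le> len_star w'"
    using ex_has_least_nat[of good_walk w0 len_star] assms by blast
  obtain w where "good_walk w" "len_star w = len_star w1"
    "\<And>w'. good_walk w' \<Longrightarrow> len_star w' = len_star w1 \<Longrightarrow> length w \<le> length w'"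
    using ex_has_least_nat[of "\<lambda>w. good_walk w \<and> len_star w = len_star w1" w1 length] w1(1) by blast
  then have "minimal_good_walk w"
    unfolding minimal_good_walk_def using w1(2) by (metis le_antisym)
  then show thesis ..
qed

lemma good_walk_replace_segment:
  assumes w: "good_walk w" and ij: "i < j" "j < length w"
    and L: "L \<noteq> []" "hd L = w ! i" "last L = w ! j" "cover_walk L" "small_drops c q L"
  defines "w' \<equiv> glue (take (Suc i) w) (glue L (drop j w))"
  shows "good_walk w'"
    and "len_star w' + len_star (take (Suc (j - i)) (drop i w)) = len_star w + len_star L"
    and "length w' + (j - i) = length w + length L - 1"
proof -
  define A where "A = take (Suc i) w"
  define S where "S = take (Suc (j - i)) (drop i w)"
  define B where "B = drop j w"
  have "w \<noteq> []"
    using ij by auto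
  have A: "A \<noteq> []" "hd A = hd w" "last A = w ! i"
    using \<open>w \<noteq> []\<close> ij by (simp_all add: A_def) (simp add: take_Suc_conv_app_nth)
  have S: "S \<noteq> []" "hd S = w ! i" "last S = w ! j"
    using ij by (auto simp: S_def take_Suc_conv_app_nth hd_drop_conv_nth)
  have B: "B \<noteq> []" "hd B = w ! j" "last B = last w"
    using ij by (auto simp: B_def hd_drop_conv_nth)
  have "glue S B = drop i w"
    using glue_take_drop(1)[of "j - i" "drop i w"] ij by (simp add: S_def B_def)
  then have w_eq: "w = glue A (glue S B)"
    using glue_take_drop(1)[of i w] ij by (simp add: A_def)
  have SB: "glue S B \<noteq> []" "hd (glue S B) = w ! i"
    using S B hd_glue[OF S(1) B(1)] by (auto simp: glue_def)
  have LB: "glue L B \<noteq> []" "hd (glue L B) = w ! i" "last (glue L B) = last w"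
    using L B hd_glue[OF L(1) B(1)] last_glue[OF L(1) B(1)] by (auto simp: glue_def)
  have walk_w: "successively P w \<longleftrightarrow> successively P A \<and> successively P S \<and> successively P B" for P
    using successively_glue[OF A(1) SB(1)] successively_glue[OF S(1) B(1)] A S SB B
    by (subst w_eq) simp
  have walk_w': "successively P w' \<longleftrightarrow> successively P A \<and> successively P L \<and> successively P B" for P
    using successively_glue[OF A(1) LB(1)] successively_glue[OF L(1) B(1)] A L LB B
    unfolding w'_def A_def[symmetric] B_def[symmetric] by simp
  have "hd w' = hd w" "last w' = last w"
    using hd_glue[OF A(1) LB(1)] last_glue[OF A(1) LB(1)] A LB
    unfolding w'_def A_def[symmetric] B_def[symmetric] by simp_all
  moreover have "w' \<noteq> []"
    using LB(1) by (simp add: w'_def A_def[symmetric] B_def[symmetric] glue_def)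
  ultimately show "good_walk w'"
    using w L unfolding good_walk_def walk_w[of "\<lambda>x y. covers x y \<or> covers y x"]
      walk_w[of "\<lambda>x y. covers x y \<longrightarrow> c x < c y + q"] walk_w' by simp
  have "len_star w = len_star A + len_star S + len_star B"
    using len_star_glue[OF A(1) SB(1)] len_star_glue[OF S(1) B(1)] A S SB B
    by (subst w_eq) simp
  moreover have "len_star w' = len_star A + len_star L + len_star B"
    using len_star_glue[OF A(1) LB(1)] len_star_glue[OF L(1) B(1)] A L LB B
    unfolding w'_def A_def[symmetric] B_def[symmetric] by simp
  ultimately show "len_star w' + len_star (take (Suc (j - i)) (drop i w)) = len_star w + len_star L"
    unfolding S_def by simp
  show "length w' + (j - i) = length w + length L - 1"
    using ij L(1) by (cases L) (simp_all add: w'_def glue_def)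
qed

context
  fixes w :: "'a list"
  assumes min: "minimal_good_walk w"
begin

lemma minimal_good_walk_good: "good_walk w"
  using min unfolding minimal_good_walk_def by blast

lemma minimal_good_walk_le:
  "good_walk w' \<Longrightarrow> len_star w' \<le> len_star w \<Longrightarrow> len_star w' = len_star w \<and> length w \<le> length w'"
  using min unfolding minimal_good_walk_def by (metis le_antisym)

lemma minimal_good_walk_distinct: "distinct w"
proof (rule ccontr)
  assume "\<not> distinct w"
  then obtain i j where ij: "i < j" "j < length w" "w ! i = w ! j"
    unfolding distinct_conv_nth by (metis linorder_neqE_nat)
  have L: "[w ! i] \<noteq> []" "hd [w ! i] = w ! i" "last [w ! i] = w ! j" "cover_walk [w ! i]"
    "small_drops c q [w ! i]"
    using ij(3) by simp_all
  note short = good_walk_replace_segment[OF minimal_good_walk_good ij(1,2) L]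
  have "length w \<le> length (glue (take (Suc i) w) (glue [w ! i] (drop j w)))"
    using minimal_good_walk_le[OF short(1)] short(2) by simp
  with short(3) ij(1) show False
    by simp
qed

lemma minimal_good_walk_not_heavy_after_start:
  assumes "0 < j" "j < length w"
  shows "c (w ! j) + q \<le> s"
proof (rule ccontr)
  assume heavy: "\<not> c (w ! j) + q \<le> s"
  have "good_walk (drop j w)"
    using minimal_good_walk_good heavy assms take_drop_split[OF assms(2)]
    unfolding good_walk_def by (auto simp: hd_drop_conv_nth)
  moreover have "len_star (drop j w) \<le> len_star w"
    using take_drop_split(2)[OF assms(2)] by simp
  ultimately have "length w \<le> length (drop j w)"
    using minimal_good_walk_le by blast
  with assms show False
    by simp
qed

lemma minimal_good_walk_not_light_before_end:
  assumes "Suc j < length w"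
  shows "q \<le> c (w ! j)"
proof (rule ccontr)
  assume light: "\<not> q \<le> c (w ! j)"
  have j: "j < length w"
    using assms by simp
  have "last (take (Suc j) w) = w ! j"
    using j by (simp add: take_Suc_conv_app_nth)
  then have "good_walk (take (Suc j) w)"
    using minimal_good_walk_good light take_drop_split[OF j]
    unfolding good_walk_def by auto
  moreover have "len_star (take (Suc j) w) \<le> len_star w"
    using take_drop_split(2)[OF j] by simp
  ultimately have "length w \<le> length (take (Suc j) w)"
    using minimal_good_walk_le by blast
  with assms show False
    by simp
qed

text \<open>Once the walk has gone up, it never returns below an earlier element: otherwise a
  descending shortcut would remove that up-step.\<close>
lemma minimal_good_walk_no_return:
  assumes "i \<le> k" "k < j" "j < length w" "covers (w ! k) (w ! Suc k)"
  shows "\<not> w ! j \<le> w ! i"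
proof
  assume "w ! j \<le> w ! i"
  then obtain L where L: "L \<noteq> []" "hd L = w ! i" "last L = w ! j" "cover_walk L" "len_star L = 0"
    using descending_walk_exists by blast
  have ij: "i < j"
    using assms by simp
  note short = good_walk_replace_segment[OF minimal_good_walk_good ij assms(3) L(1-4)
      small_drops_if_no_rise[OF L(5)]]
  define S where "S = take (Suc (j - i)) (drop i w)"
  have "Suc (k - i) < length S" "S ! (k - i) = w ! k" "S ! Suc (k - i) = w ! Suc k"
    using assms by (auto simp: S_def Suc_diff_le)
  then have "len_star S \<noteq> 0"
    using assms(4) unfolding len_star_eq_0_iff by metis
  then have "len_star (glue (take (Suc i) w) (glue L (drop j w))) < len_star w"
    using short(2) L(5) unfolding S_def by simp
  then show False
    using minimal_good_walk_le[OF short(1)] by simp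
qed

end

end

section \<open>From a minimal good walk to a maximal path\<close>

locale walk_extension = frobenius_weight c s q for c :: "'a::{finite,order} \<Rightarrow> nat" and s q +
  fixes w P E :: "'a list"
  assumes minimal: "minimal_good_walk w"
    and P: "P \<noteq> []" "last P = hd w" "saturated_chain P" "\<And>z. \<not> z < hd P"
    and E: "E \<noteq> []" "hd E = last w" "saturated_chain E" "\<And>z. \<not> last E < z"
    and two_q: "2 * q \<le> s + 1"
begin

definition path :: "'a list" where
  "path = glue P (glue w E)"

text \<open>The walk w occupies the positions b, ..., e of the path.\<close>
abbreviation b :: nat where "b \<equiv> length P - 1"
abbreviation e :: nat where "e \<equiv> length P + length w - 2"

lemma w_good: "good_walk w"
  using minimal by (rule minimal_good_walk_good)

lemma w_ne: "w \<noteq> []"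
  using w_good unfolding good_walk_def by blast

lemma length_P: "length P = Suc b"
  using P(1) by (cases P) auto

lemma Suc_e: "Suc e = b + length w"
  using P(1) w_ne by (cases P; cases w) auto

lemma path_eq: "path = butlast P @ w @ tl E"
proof -
  have "E = last w # tl E"
    using E(1,2) by (cases E) auto
  then have "butlast w @ E = w @ tl E"
    using w_ne by (metis append_butlast_last_id append.assoc append_Cons append_Nil)
  then show ?thesis
    by (simp add: path_def glue_def)
qed

lemma length_path: "length path = e + length E"
  using P(1) E(1) w_ne by (simp add: path_eq) (cases P; cases w; cases E; simp)

lemma nth_path_P: "p \<le> b \<Longrightarrow> path ! p = P ! p"
proof -
  assume p: "p \<le> b"
  obtain P' x where P': "P = P' @ [x]"
    using P(1) by (cases P rule: rev_cases) auto
  with P(2) have "x = hd w"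
    by simp
  then have "path = P @ tl w @ tl E"
    unfolding path_eq using w_ne P' by simp
  then show ?thesis
    using p P' by (simp add: nth_append)
qed

lemma nth_path_w:
  assumes "b \<le> p" "p < b + length w"
  shows "path ! p = w ! (p - b)"
proof -
  have "p - b < length w"
    using assms by linarith
  then show ?thesis
    using assms(1) by (simp add: path_eq nth_append)
qed

lemma nth_path_E: "e \<le> p \<Longrightarrow> path ! p = E ! (p - e)"
proof -
  assume p: "e \<le> p"
  obtain w' x where w': "w = w' @ [x]"
    using w_ne by (cases w rule: rev_cases) auto
  with E(1,2) have "E = x # tl E"
    by (cases E) auto
  define X where "X = butlast P @ w'"
  have "path = X @ E"
    unfolding path_eq X_def using w' \<open>E = x # tl E\<close> by simp
  moreover have "length X = e"
    using P(1) w' by (cases P) (simp_all add: X_def)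
  ultimately show ?thesis
    using p by (metis le_add_diff_inverse nth_append_length_plus)
qed

lemma P_heavy: "y \<in> set P \<Longrightarrow> s < c y + q"
  using saturated_chain_bounds(2)[OF P(3)] weight_antimono w_good P(2)
  unfolding good_walk_def by (metis add_le_mono1 order.strict_trans2)

lemma E_light: "y \<in> set E \<Longrightarrow> c y < q"
  using saturated_chain_bounds(1)[OF E(3)] weight_antimono w_good E(2)
  unfolding good_walk_def by (metis order.strict_trans1)

lemma heavy_light_exclusive: "s < c y + q \<Longrightarrow> c y < q \<Longrightarrow> False"
  using two_q by linarith

lemma heavy_iff: "p < length path \<Longrightarrow> s < c (path ! p) + q \<longleftrightarrow> p \<le> b"
proof -
  assume p: "p < length path"
  consider "p \<le> b" | "b < p" "p < b + length w" | "b + length w \<le> p"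
    by linarith
  then show ?thesis
  proof cases
    case 1
    then show ?thesis
      using P_heavy nth_path_P length_P by simp
  next
    case 2
    then have "c (w ! (p - b)) + q \<le> s"
      by (intro minimal_good_walk_not_heavy_after_start[OF minimal]) linarith+
    then show ?thesis
      using 2 nth_path_w by simp
  next
    case 3
    then have "c (path ! p) < q"
      using p nth_path_E length_path E_light Suc_e by simp
    moreover have "\<not> p \<le> b"
      using 3 w_ne by (cases w) auto
    ultimately show ?thesis
      using heavy_light_exclusive by blast
  qed
qed

lemma light_iff: "p < length path \<Longrightarrow> c (path ! p) < q \<longleftrightarrow> e \<le> p"
proof -
  assume p: "p < length path"
  consider "p < b" | "b \<le> p" "p < e" | "e \<le> p"
    by linarith
  then show ?thesis
  proof cases
    case 1
    then have "s < c (path ! p) + q"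
      using P_heavy nth_path_P length_P by simp
    moreover have "\<not> e \<le> p"
      using 1 Suc_e w_ne by (cases w) auto
    ultimately show ?thesis
      using heavy_light_exclusive by blast
  next
    case 2
    then have "q \<le> c (w ! (p - b))"
      using Suc_e by (intro minimal_good_walk_not_light_before_end[OF minimal]) linarith
    then show ?thesis
      using 2 Suc_e nth_path_w by simp
  next
    case 3
    then show ?thesis
      using p nth_path_E length_path E_light by simp
  qed
qed

lemma path_increasing_on_P: "i < j \<Longrightarrow> j \<le> b \<Longrightarrow> path ! i < path ! j"
  using sorted_wrt_nth_less[OF saturated_chain_sorted[OF P(3)], of i j] nth_path_P length_P by simp

lemma path_increasing_on_E: "e \<le> i \<Longrightarrow> i < j \<Longrightarrow> j < length path \<Longrightarrow> path ! i < path ! j"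
  using sorted_wrt_nth_less[OF saturated_chain_sorted[OF E(3)], of "i - e" "j - e"]
    nth_path_E length_path by simp

text \<open>Every element of P is heavy and every element of E is light, so a descent can only
  happen strictly inside the minimal walk.\<close>
lemma descent_inside_w:
  assumes "i < j" "j < length path" "path ! j \<le> path ! i"
  shows "b < i" and "j < e"
proof -
  have weights: "c (path ! i) \<le> c (path ! j)"
    using weight_antimono[OF assms(3)] .
  show "b < i"
  proof (rule ccontr)
    assume "\<not> b < i"
    then have "s < c (path ! j) + q"
      using heavy_iff[of i] weights assms(1,2) by simp
    then have "j \<le> b"
      using heavy_iff assms(2) by blast
    then show False
      using path_increasing_on_P[OF assms(1)] assms(3) by (simp add: less_le_not_le)
  qed
  show "j < e"
  proof (rule ccontr)
    assume "\<not> j < e"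
    then have "c (path ! i) < q"
      using light_iff[of j] weights assms(2) by simp
    then have "e \<le> i"
      using light_iff assms(1,2) by simp
    then show False
      using path_increasing_on_E[OF _ assms(1,2)] assms(3) by (simp add: less_le_not_le)
  qed
qed

lemma distinct_path: "distinct path"
proof -
  have "path ! i \<noteq> path ! j" if ij: "i < j" "j < length path" for i j
  proof
    assume eq: "path ! i = path ! j"
    then have i: "b < i" and j: "j < e"
      using descent_inside_w[OF ij] by simp_all
    then have "w ! (i - b) = w ! (j - b)"
      using eq nth_path_w Suc_e ij by simp
    moreover have "i - b < j - b" "j - b < length w"
      using i j ij Suc_e by linarith+
    ultimately show False
      using minimal_good_walk_distinct[OF minimal] by (simp add: nth_eq_iff_index_eq)
  qed
  then show ?thesis
    unfolding distinct_conv_nth by (metis linorder_neqE_nat)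
qed

lemma path_no_return:
  assumes "i \<le> k" "k < j" "j < length path" "covers (path ! k) (path ! Suc k)"
  shows "\<not> path ! j \<le> path ! i"
proof
  assume le: "path ! j \<le> path ! i"
  have "i < j"
    using assms(1,2) by simp
  then have i: "b < i" and j: "j < e"
    using descent_inside_w[OF _ assms(3) le] by simp_all
  have "covers (w ! (k - b)) (w ! Suc (k - b))" "w ! (j - b) \<le> w ! (i - b)"
    using assms le i j Suc_e nth_path_w[of k] nth_path_w[of "Suc k"] nth_path_w[of i] nth_path_w[of j]
    by (simp_all add: Suc_diff_le)
  moreover have "i - b \<le> k - b" "k - b < j - b" "j - b < length w"
    using assms i j Suc_e by linarith+
  ultimately show False
    using minimal_good_walk_no_return[OF minimal] by blast
qed

lemma path_glue_facts:
  "glue w E \<noteq> []" "last P = hd (glue w E)" "hd path = hd P" "last path = last E"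
proof -
  show wE: "glue w E \<noteq> []" "last P = hd (glue w E)"
    using E(1,2) hd_glue[OF w_ne E(1)] P(2) by (auto simp: glue_def)
  show "hd path = hd P" "last path = last E"
    unfolding path_def hd_glue[OF P(1) wE] last_glue[OF P(1) wE]
    using last_glue[OF w_ne E(1) E(2)[symmetric]] by simp_all
qed

lemma path_successively:
  "successively R path \<longleftrightarrow> successively R P \<and> successively R w \<and> successively R E"
  unfolding path_def successively_glue[OF P(1) path_glue_facts(1,2)]
    successively_glue[OF w_ne E(1) E(2)[symmetric]] ..

lemma cover_walk_path: "cover_walk path"
  using successively_mono[OF P(3)] successively_mono[OF E(3)] w_good
  unfolding path_successively good_walk_def by simp

lemma maximal_path: "is_maximal_path path"
proof -
  have path_ne: "path \<noteq> []"
    using path_glue_facts(1) by (simp add: path_def glue_def)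
  have last_up: "covers (path ! (length path - 2)) (path ! (length path - 1))"
    if "2 \<le> length path"
  proof -
    have "path ! (length path - 1) = last E"
      using path_ne path_glue_facts(4) by (simp add: last_conv_nth)
    then have "\<not> covers (path ! (length path - 1)) (path ! (length path - 2))"
      using E(4) covers_less by metis
    moreover have "Suc (length path - 2) = length path - 1"
      using that by simp
    ultimately show ?thesis
      using successively_nth[OF cover_walk_path, of "length path - 2"] that by simp
  qed
  show ?thesis
    unfolding is_maximal_path_def is_path_def
    using path_ne distinct_path P(4) E(4) path_glue_facts(3,4) last_up
      cover_walk_path[unfolded successively_conv_nth] by auto
qed

lemma small_drops_path: "small_drops c q path"
proof -
  have "small_drops c q P"
    using P_heavy bounded unfolding successively_conv_nth by (metis le_less_trans nth_mem)
  moreover have "small_drops c q E"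
    using E_light unfolding successively_conv_nth by (metis Suc_lessD nth_mem trans_less_add2)
  ultimately show ?thesis
    using w_good unfolding path_successively good_walk_def by simp
qed

lemma path_weight_bound: "s + 2 \<le> 2 * q + len_star path * (q - 1)"
proof -
  have path_ne: "path \<noteq> []"
    using path_glue_facts(1) by (simp add: path_def glue_def)
  have "c (hd path) \<le> c (last path) + len_star path * (q - 1)"
    using walk_weight_drop[OF antimono cover_walk_path small_drops_path path_ne] .
  moreover have "s < c (hd path) + q"
    using P_heavy[of "hd P"] P(1) path_glue_facts(3) by simp
  moreover have "c (last path) < q"
    using E_light[of "last E"] E(1) path_glue_facts(4) by simp
  ultimately show ?thesis
    by linarith
qed

end

context frobenius_weight
begin

lemma path_from_good_walk:
  assumes "good_walk w0" and "2 * q \<le> s + 1"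
  obtains C :: "'a list" where "is_maximal_path C" "cond_star C" "s + 2 \<le> 2 * q + len_star C * (q - 1)"
proof -
  obtain w where min: "minimal_good_walk w"
    using minimal_good_walk_exists[OF assms(1)] by blast
  obtain m where m: "m \<le> hd w" "\<And>z. \<not> z < m"
    using finite_has_minimal2[of UNIV "hd w"] by (auto simp: less_le_not_le)
  obtain M where M: "last w \<le> M" "\<And>z. \<not> M < z"
    using finite_has_maximal2[of UNIV "last w"] by (auto simp: less_le_not_le)
  obtain P where P: "P \<noteq> []" "hd P = m" "last P = hd w" "saturated_chain P"
    using saturated_chain_exists[OF m(1)] by blast
  obtain E where E: "E \<noteq> []" "hd E = last w" "last E = M" "saturated_chain E"
    using saturated_chain_exists[OF M(1)] by blast
  interpret walk_extension c s q w P E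
    using min P E m(2) M(2) assms(2) by unfold_locales auto
  interpret no_return_path path
    using maximal_path path_no_return unfolding is_maximal_path_def by unfold_locales blast+
  show thesis
    using that maximal_path satisfies_cond_star path_weight_bound by blast
qed

lemma splitting_ideal_exists:
  assumes "(R + 2) * (q - 1) < s"
    and "\<And>C :: 'a list. is_maximal_path C \<Longrightarrow> cond_star C \<Longrightarrow> len_star C \<le> R"
  obtains I where "splitting_ideal I"
proof -
  have split: "(R + 2) * (q - 1) = R * (q - 1) + 2 * (q - 1)"
    by (rule add_mult_distrib)
  have "\<not> good_walk w0" for w0
  proof
    assume "good_walk w0"
    moreover have "2 * q \<le> s + 1"
      using assms(1) q_pos split by linarith
    ultimately obtain C :: "'a list" where
      C: "is_maximal_path C" "cond_star C" "s + 2 \<le> 2 * q + len_star C * (q - 1)"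
      by (rule path_from_good_walk)
    have "len_star C * (q - 1) \<le> R * (q - 1)"
      using assms(2)[OF C(1,2)] by (rule mult_le_mono1)
    then show False
      using C(3) assms(1) q_pos split by linarith
  qed
  then show thesis
    using that splitting_ideal_or_good_walk by blast
qed

end

section \<open>Monomials of the Hibi ring\<close>

definition monomial_exp :: "nat \<Rightarrow> ('a::finite \<Rightarrow> nat) \<Rightarrow> ('a option \<Rightarrow>\<^sub>0 nat)" where
  "monomial_exp s c = Poly_Mapping.single None s + (\<Sum>p\<in>UNIV. Poly_Mapping.single (Some p) (c p))"

lemma lookup_monomial_exp_None [simp]: "Poly_Mapping.lookup (monomial_exp s c) None = s"
  by (simp add: monomial_exp_def lookup_add lookup_sum lookup_single)

lemma lookup_monomial_exp_Some [simp]: "Poly_Mapping.lookup (monomial_exp s c) (Some x) = c x"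
proof -
  have "(\<Sum>p\<in>UNIV. Poly_Mapping.lookup (Poly_Mapping.single (Some p) (c p)) (Some x))
      = (\<Sum>p\<in>UNIV. if p = x then c p else 0)"
    by (rule sum.cong) (auto simp: lookup_single)
  then show ?thesis
    by (simp add: monomial_exp_def lookup_add lookup_sum lookup_single)
qed

lemma monomial_exp_eqI:
  "Poly_Mapping.lookup M None = s \<Longrightarrow> (\<And>p. Poly_Mapping.lookup M (Some p) = c p) \<Longrightarrow> M = monomial_exp s c"
  by (rule poly_mapping_eqI) (case_tac k; simp)

lemma monomial_exp_lookup:
  "monomial_exp (Poly_Mapping.lookup M None) (\<lambda>p. Poly_Mapping.lookup M (Some p)) = M"
  by (rule monomial_exp_eqI[symmetric]) auto

lemma monomial_exp_add: "monomial_exp s c + monomial_exp s' c' = monomial_exp (s + s') (\<lambda>p. c p + c' p)"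
  by (rule monomial_exp_eqI) (auto simp: lookup_add)

lemma hibi_gen_eq_monomial:
  "hibi_gen I = Poly_Mapping.single (monomial_exp 1 (\<lambda>p. if p \<in> I then 1 else 0)) (1::'k::field)"
proof -
  have "Poly_Mapping.single None 1 + (\<Sum>p\<in>I. Poly_Mapping.single (Some p) 1)
      = monomial_exp 1 (\<lambda>p. if p \<in> I then 1 else 0)" (is "?M = _")
  proof (rule monomial_exp_eqI)
    fix x
    have "(\<Sum>p\<in>I. Poly_Mapping.lookup (Poly_Mapping.single (Some p) (1::nat)) (Some x))
        = (\<Sum>p\<in>I. if p = x then 1 else 0)"
      by (rule sum.cong) (auto simp: lookup_single when_def)
    also have "\<dots> = (if x \<in> I then 1 else 0)"
      by (simp add: sum.delta')
    finally show "Poly_Mapping.lookup ?M (Some x) = (if x \<in> I then 1 else 0)"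
      by (simp add: lookup_add lookup_sum lookup_single when_def)
  qed (simp add: lookup_add lookup_sum lookup_single)
  then show ?thesis
    unfolding hibi_gen_def by simp
qed

lemma single_add_mult:
  "Poly_Mapping.single (A + B) (1::'k::field) = Poly_Mapping.single A 1 * Poly_Mapping.single B 1"
  by (simp add: mult_single)

lemma single_monomial_exp_power:
  "Poly_Mapping.single (monomial_exp 1 d) (1::'k::field) ^ q
    = Poly_Mapping.single (monomial_exp q (\<lambda>p. q * d p)) 1"
proof (induction q)
  case 0
  have "monomial_exp 0 (\<lambda>p. 0 * d p) = 0"
    by (rule monomial_exp_eqI[symmetric]) auto
  then show ?case by simp
next
  case (Suc q)
  have "monomial_exp 1 d + monomial_exp q (\<lambda>p. q * d p) = monomial_exp (Suc q) (\<lambda>p. Suc q * d p)"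
    unfolding monomial_exp_add by (rule monomial_exp_eqI) auto
  then show ?case
    using Suc.IH by (simp add: mult_single)
qed

definition hibi_exp_from :: "nat \<Rightarrow> ('a::order option \<Rightarrow>\<^sub>0 nat) \<Rightarrow> bool" where
  "hibi_exp_from n M \<longleftrightarrow>
     hibi_weight (Poly_Mapping.lookup M None) (\<lambda>p. Poly_Mapping.lookup M (Some p)) \<and>
     n \<le> Poly_Mapping.lookup M None"

text \<open>The k-span of the monomials of the Hibi ring of T-degree at least n: it contains m^n,
  and for n = 1 also m^[q], but not 1.\<close>
definition hibi_span_from :: "nat \<Rightarrow> ('a::{finite,order}, 'k::field) hpoly set" where
  "hibi_span_from n = {f. \<forall>M \<in> Poly_Mapping.keys f. hibi_exp_from n M}"

lemma hibi_exp_from_add: "hibi_exp_from a A \<Longrightarrow> hibi_exp_from b B \<Longrightarrow> hibi_exp_from (a + b) (A + B)"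
  unfolding hibi_exp_from_def hibi_weight_def antimono_def lookup_add by (auto intro: add_mono)

lemma hibi_span_from_zero: "0 \<in> hibi_span_from n"
  by (simp add: hibi_span_from_def)

lemma hibi_span_from_add: "f \<in> hibi_span_from n \<Longrightarrow> g \<in> hibi_span_from n \<Longrightarrow> f + g \<in> hibi_span_from n"
  using keys_add[of f g] unfolding hibi_span_from_def by blast

lemma hibi_span_from_mult:
  assumes "f \<in> hibi_span_from a" "g \<in> hibi_span_from b"
  shows "f * g \<in> hibi_span_from (a + b)"
  unfolding hibi_span_from_def
proof (intro CollectI ballI)
  fix M assume "M \<in> Poly_Mapping.keys (f * g)"
  then obtain A B where "M = A + B" "A \<in> Poly_Mapping.keys f" "B \<in> Poly_Mapping.keys g"
    using keys_mult by blast
  then show "hibi_exp_from (a + b) M"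
    using assms hibi_exp_from_add unfolding hibi_span_from_def by blast
qed

lemma hibi_span_from_antimono: "n \<le> m \<Longrightarrow> f \<in> hibi_span_from m \<Longrightarrow> f \<in> hibi_span_from n"
  unfolding hibi_span_from_def hibi_exp_from_def by auto

lemma hibi_span_from_const: "Poly_Mapping.single 0 a \<in> hibi_span_from 0"
  by (simp add: hibi_span_from_def hibi_exp_from_def hibi_weight_def antimono_def)

lemma hibi_gen_in_span: "I \<in> poset_ideals \<Longrightarrow> hibi_gen I \<in> hibi_span_from 1"
  unfolding hibi_span_from_def hibi_exp_from_def hibi_weight_def antimono_def hibi_gen_eq_monomial
    poset_ideals_def by auto

lemma hibi_ring_subset_span: "(hibi_ring :: ('a::{finite,order}, 'k::field) hpoly set) \<subseteq> hibi_span_from 0"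
proof
  fix f :: "('a, 'k) hpoly"
  assume "f \<in> hibi_ring"
  then show "f \<in> hibi_span_from 0"
    by induction
      (use hibi_span_from_const hibi_gen_in_span hibi_span_from_antimono hibi_span_from_add
        hibi_span_from_mult in fastforce)+
qed

lemma R_ideal_subset_span: "S \<subseteq> hibi_span_from n \<Longrightarrow> R_ideal S \<subseteq> hibi_span_from n"
proof
  assume S: "S \<subseteq> hibi_span_from n"
  fix f
  assume "f \<in> R_ideal S"
  then show "f \<in> hibi_span_from n"
  proof induction
    case (smult r s)
    then show ?case
      using hibi_span_from_mult[of r 0 s n] hibi_ring_subset_span S by auto
  qed (simp_all add: hibi_span_from_zero hibi_span_from_add)
qed

lemma hibi_max_subset_span: "hibi_max \<subseteq> hibi_span_from 1"
  unfolding hibi_max_def using hibi_gen_in_span by (intro R_ideal_subset_span) blast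

lemma prod_list_in_span: "set xs \<subseteq> hibi_span_from 1 \<Longrightarrow> prod_list xs \<in> hibi_span_from (length xs)"
  by (induction xs) (use hibi_span_from_const[of 1] hibi_span_from_mult in fastforce)+

lemma max_pow_subset_span: "max_pow r \<subseteq> hibi_span_from r"
  unfolding max_pow_def using prod_list_in_span hibi_max_subset_span
  by (intro R_ideal_subset_span) fastforce

lemma max_frob_subset_span:
  assumes "1 \<le> q"
  shows "(max_frob q :: ('a::{finite,order}, 'k::field) hpoly set) \<subseteq> hibi_span_from 1"
  unfolding max_frob_def
proof (intro R_ideal_subset_span subsetI)
  fix y :: "('a, 'k) hpoly"
  assume "y \<in> {x ^ q |x. x \<in> hibi_max}"
  then obtain x where "y = x ^ q" "x \<in> hibi_span_from 1"
    using hibi_max_subset_span by blast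
  moreover have "x ^ n \<in> hibi_span_from n" if "x \<in> hibi_span_from 1" for n
    using that by (induction n) (use hibi_span_from_const[of 1] hibi_span_from_mult in fastforce)+
  ultimately show "y \<in> hibi_span_from 1"
    using hibi_span_from_antimono[OF assms] by blast
qed

lemma one_notin_span_1: "(1 :: ('a::{finite,order}, 'k::field) hpoly) \<notin> hibi_span_from 1"
  by (simp add: hibi_span_from_def hibi_exp_from_def)

lemma one_in_max_pow_0: "(1 :: ('a::{finite,order}, 'k::field) hpoly) \<in> max_pow 0"
proof -
  have "(1 :: ('a, 'k) hpoly) \<in> hibi_ring"
    using hibi_ring.const[of 1] by simp
  moreover have "(1 :: ('a, 'k) hpoly) \<in> {prod_list xs |xs. length xs = 0 \<and> set xs \<subseteq> hibi_max}"
    by (intro CollectI exI[of _ "[]"]) simp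
  ultimately show ?thesis
    unfolding max_pow_def using R_ideal.smult by fastforce
qed

lemma R_ideal_mult: "f \<in> R_ideal S \<Longrightarrow> r \<in> hibi_ring \<Longrightarrow> r * f \<in> R_ideal S"
proof (induction rule: R_ideal.induct)
  case zero
  then show ?case by (simp add: R_ideal.zero)
next
  case (smult r' s)
  then have "(r * r') * s \<in> R_ideal S"
    by (intro R_ideal.smult hibi_ring.mult)
  then show ?case
    by (simp add: mult.assoc)
next
  case (add f g)
  then have "r * f + r * g \<in> R_ideal S"
    by (intro R_ideal.add)
  then show ?case
    by (simp add: distrib_left)
qed

lemma R_ideal_if_monomials:
  fixes f :: "('a::{finite,order}, 'k::field) hpoly"
  assumes "\<And>M. M \<in> Poly_Mapping.keys f \<Longrightarrow> Poly_Mapping.single M 1 \<in> R_ideal S"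
  shows "f \<in> R_ideal S"
  using assms
proof (induction "card (Poly_Mapping.keys f)" arbitrary: f)
  case 0
  then show ?case by (simp add: R_ideal.zero)
next
  case (Suc n)
  then obtain M where M: "M \<in> Poly_Mapping.keys f"
    by (metis card.empty card_gt_0_iff zero_less_Suc equals0I)
  define g where "g = f - Poly_Mapping.single M (Poly_Mapping.lookup f M)"
  have keys_g: "Poly_Mapping.keys g = Poly_Mapping.keys f - {M}"
  proof (rule set_eqI)
    show "x \<in> Poly_Mapping.keys g \<longleftrightarrow> x \<in> Poly_Mapping.keys f - {M}" for x
      unfolding g_def in_keys_iff lookup_minus lookup_single
      by (cases "x = M") (auto simp: when_def in_keys_iff)
  qed
  have "card (Poly_Mapping.keys g) = n"
    using Suc.hyps(2) M unfolding keys_g by simp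
  moreover have "Poly_Mapping.single M' 1 \<in> R_ideal S" if "M' \<in> Poly_Mapping.keys g" for M'
    using Suc.prems that unfolding keys_g by blast
  ultimately have "g \<in> R_ideal S"
    using Suc.hyps(1) by blast
  moreover have "Poly_Mapping.single 0 (Poly_Mapping.lookup f M) * Poly_Mapping.single M 1 \<in> R_ideal S"
    using R_ideal_mult[OF Suc.prems[OF M] hibi_ring.const] .
  ultimately have "Poly_Mapping.single M (Poly_Mapping.lookup f M) + g \<in> R_ideal S"
    by (intro R_ideal.add) (simp_all add: mult_single)
  then show ?case
    by (simp add: g_def)
qed

text \<open>Peel off the generator of the ideal where the weight is positive.\<close>
lemma monomial_in_hibi_ring:
  "hibi_weight s c \<Longrightarrow>
    (Poly_Mapping.single (monomial_exp s c) (1::'k::field) :: ('a::{finite,order}, 'k) hpoly) \<in> hibi_ring"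
proof (induction s arbitrary: c)
  case 0
  then have "monomial_exp 0 c = 0"
    unfolding hibi_weight_def by (intro monomial_exp_eqI[symmetric]) auto
  then show ?case
    using hibi_ring.const[of 1] by simp
next
  case (Suc n)
  define I where "I = {x. 1 \<le> c x}"
  define c' where "c' x = c x - (if x \<in> I then 1 else 0)" for x
  have anti: "c y \<le> c x" if "x \<le> y" for x y
    using Suc.prems that unfolding hibi_weight_def by (simp add: antimonoD)
  have "hibi_weight n c'"
    unfolding hibi_weight_def antimono_def
  proof (intro conjI allI impI)
    show "c' y \<le> c' x" if "x \<le> y" for x y
      using anti[OF that] unfolding c'_def I_def by auto
    show "c' x \<le> n" for x
      using Suc.prems unfolding hibi_weight_def c'_def I_def by (simp add: le_diff_conv)
  qed
  moreover have "I \<in> poset_ideals"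
    unfolding poset_ideals_def I_def using anti by (auto intro: order_trans)
  ultimately have "hibi_gen I * Poly_Mapping.single (monomial_exp n c') (1::'k) \<in> hibi_ring"
    using Suc.IH by (intro hibi_ring.mult hibi_ring.gen)
  moreover have "monomial_exp 1 (\<lambda>p. if p \<in> I then 1 else 0) + monomial_exp n c' = monomial_exp (Suc n) c"
    unfolding monomial_exp_add by (rule monomial_exp_eqI[symmetric]) (auto simp: c'_def I_def)
  ultimately show ?case
    unfolding hibi_gen_eq_monomial single_add_mult[symmetric] by simp
qed

lemma hibi_gen_in_max: "I \<in> poset_ideals \<Longrightarrow> hibi_gen I \<in> hibi_max"
  using R_ideal.smult[OF hibi_ring.const[of 1], of "hibi_gen I" "hibi_gen ` poset_ideals"]
  unfolding hibi_max_def by simp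

context frobenius_weight
begin

lemma splitting_ideal_residual_weight:
  assumes "splitting_ideal I"
  shows "hibi_weight (s - q) (\<lambda>x. c x - (if x \<in> I then q else 0))"
  unfolding hibi_weight_def antimono_def
proof (intro conjI allI impI)
  have I: "I \<in> poset_ideals" "\<And>x. x \<in> I \<Longrightarrow> q \<le> c x" "\<And>x. x \<notin> I \<Longrightarrow> c x + q \<le> s"
    "\<And>x y. x \<le> y \<Longrightarrow> x \<in> I \<Longrightarrow> y \<notin> I \<Longrightarrow> c y + q \<le> c x"
    using assms unfolding splitting_ideal_def by auto
  show "c y - (if y \<in> I then q else 0) \<le> c x - (if x \<in> I then q else 0)" if "x \<le> y" for x y
    using I(1) I(4)[OF that] weight_antimono[OF that] that unfolding poset_ideals_def by auto
  show "c x - (if x \<in> I then q else 0) \<le> s - q" for x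
    using I(2,3)[of x] bounded[of x] by auto
qed

lemma monomial_in_max_frob:
  assumes "splitting_ideal I"
  shows "(Poly_Mapping.single (monomial_exp s c) (1::'k::field) :: ('a, 'k) hpoly) \<in> max_frob q"
proof -
  define c' where "c' x = c x - (if x \<in> I then q else 0)" for x
  have I: "I \<in> poset_ideals" "\<And>x. x \<in> I \<Longrightarrow> q \<le> c x" "\<And>x. x \<notin> I \<Longrightarrow> c x + q \<le> s"
    using assms unfolding splitting_ideal_def by auto
  have "q \<le> s"
    using I(2,3) bounded by (metis le_add2 order.trans)
  moreover have "(\<lambda>p. c' p + q * (if p \<in> I then 1 else 0)) = c"
    using I(2) by (auto simp: c'_def)
  ultimately have
    "monomial_exp (s - q) c' + monomial_exp q (\<lambda>p. q * (if p \<in> I then 1 else 0)) = monomial_exp s c"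
    unfolding monomial_exp_add by simp
  moreover have "Poly_Mapping.single (monomial_exp (s - q) c') (1::'k) * hibi_gen I ^ q \<in> max_frob q"
    unfolding max_frob_def using hibi_gen_in_max[OF I(1)]
      monomial_in_hibi_ring[OF splitting_ideal_residual_weight[OF assms, folded c'_def]]
    by (intro R_ideal.smult) auto
  ultimately show ?thesis
    unfolding hibi_gen_eq_monomial single_monomial_exp_power single_add_mult[symmetric] by simp
qed

end

section \<open>The bound on nu\<close>

lemma max_pow_subset_max_frob:
  assumes q: "1 \<le> q" and r: "(R + 2) * (q - 1) < r"
    and rank: "\<And>C :: 'a list. is_maximal_path C \<Longrightarrow> cond_star C \<Longrightarrow> len_star C \<le> R"
  shows "(max_pow r :: ('a::{finite,order}, 'k::field) hpoly set) \<subseteq> max_frob q"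
proof
  fix f :: "('a, 'k) hpoly"
  assume "f \<in> max_pow r"
  then have f: "f \<in> hibi_span_from r"
    using max_pow_subset_span by blast
  show "f \<in> max_frob q"
    unfolding max_frob_def
  proof (rule R_ideal_if_monomials)
    fix M
    assume "M \<in> Poly_Mapping.keys f"
    then have M: "hibi_exp_from r M"
      using f unfolding hibi_span_from_def by blast
    define s where "s = Poly_Mapping.lookup M None"
    define c where "c = (\<lambda>p. Poly_Mapping.lookup M (Some p))"
    interpret frobenius_weight c s q
      using M q unfolding hibi_exp_from_def s_def c_def by unfold_locales auto
    have "(R + 2) * (q - 1) < s"
      using M r unfolding hibi_exp_from_def s_def by linarith
    then obtain I where "splitting_ideal I"
      using splitting_ideal_exists rank by blast
    then have "(Poly_Mapping.single (monomial_exp s c) 1 :: ('a, 'k) hpoly) \<in> max_frob q"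
      by (rule monomial_in_max_frob)
    then show "(Poly_Mapping.single M 1 :: ('a, 'k) hpoly) \<in> R_ideal {x ^ q |x. x \<in> hibi_max}"
      by (simp add: max_frob_def s_def c_def monomial_exp_lookup)
  qed
qed

lemma hibi_nu_le:
  assumes q: "1 \<le> q"
    and rank: "\<And>C :: 'a list. is_maximal_path C \<Longrightarrow> cond_star C \<Longrightarrow> len_star C \<le> R"
  shows "hibi_nu TYPE('a::{finite,order}) TYPE('k::field) q \<le> (R + 2) * (q - 1)"
proof -
  define A where "A = {r. \<not> (max_pow r \<subseteq> (max_frob q :: ('a, 'k) hpoly set))}"
  have "max_pow r \<subseteq> (max_frob q :: ('a, 'k) hpoly set)" if "(R + 2) * (q - 1) < r" for r
    using max_pow_subset_max_frob q that rank by blast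
  then have A_bounded: "A \<subseteq> {..(R + 2) * (q - 1)}"
    unfolding A_def by (auto simp: not_le[symmetric])
  have "0 \<in> A"
    using one_in_max_pow_0 one_notin_span_1 max_frob_subset_span[OF q] unfolding A_def by blast
  then have "Max A \<le> (R + 2) * (q - 1)"
    using A_bounded finite_subset[OF A_bounded] by (intro Max.boundedI) auto
  then show ?thesis
    unfolding hibi_nu_def A_def .
qed

lemma len_star_le_rank_star:
  assumes "is_maximal_path (C :: 'a::{finite,order} list)" "cond_star C"
  shows "len_star C \<le> rank_star TYPE('a)"
proof -
  define A where "A = {len_star (D :: 'a list) | D. is_maximal_path D \<and> cond_star D}"
  have "A \<subseteq> {..card (UNIV :: 'a set)}"
  proof
    fix x assume "x \<in> A"
    then obtain D :: "'a list" where D: "x = len_star D" "is_maximal_path D"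
      by (auto simp: A_def)
    then have "length D = card (set D)"
      unfolding is_maximal_path_def is_path_def by (simp add: distinct_card)
    also have "\<dots> \<le> card (UNIV :: 'a set)"
      by (rule card_mono) auto
    finally show "x \<in> {..card (UNIV :: 'a set)}"
      using D(1) len_star_le_length[of D] by simp
  qed
  then have "finite A"
    by (rule finite_subset) simp
  moreover have "len_star C \<in> A"
    using assms unfolding A_def by blast
  ultimately show ?thesis
    unfolding rank_star_def A_def[symmetric] by simp
qed

theorem corollary2p9:
  fixes p :: nat
  assumes "CHAR('k::field) = p" and "p > 0"
  shows "limsup (\<lambda>e. ereal (real (hibi_nu TYPE('a::{finite,order}) TYPE('k) (p ^ e)) / real (p ^ e)))
           \<le> ereal (real (rank_star TYPE('a)) + 2)"
proof -
  define R where "R = rank_star TYPE('a)"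
  have "real (hibi_nu TYPE('a) TYPE('k) q) / real q \<le> real R + 2" if q: "1 \<le> q" for q
  proof -
    have "hibi_nu TYPE('a) TYPE('k) q \<le> (R + 2) * (q - 1)"
      by (rule hibi_nu_le[OF q]) (simp add: R_def len_star_le_rank_star)
    also have "\<dots> \<le> (R + 2) * q"
      by (rule mult_le_mono2) simp
    finally have "real (hibi_nu TYPE('a) TYPE('k) q) \<le> (real R + 2) * real q"
      by (metis of_nat_add of_nat_le_iff of_nat_mult of_nat_numeral)
    then show ?thesis
      using q by (simp add: divide_le_eq)
  qed
  moreover have "1 \<le> p ^ e" for e
    using assms(2) by simp
  ultimately have "ereal (real (hibi_nu TYPE('a) TYPE('k) (p ^ e)) / real (p ^ e)) \<le> ereal (real R + 2)" for e
    by (simp only: ereal_less_eq(3))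
  then show ?thesis
    unfolding R_def by (intro Limsup_bounded always_eventually) auto
qed

end
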